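(* Suppose $\Sigma=\mathbb C_j$ and let $Z^{(-1)}(\alpha,z_0,z)$ and $\widehat Z^{(-1)}(\alpha,z_0,z)$ ($\alpha=1,j$) be Cauchy kernels in $\mathbb C_j$ of $\partial_{\overline z}W=aW+b\overline W$ and of $\partial_{\overline z}V=-aV-\overline b\,\overline V$ respectively, both behaving like $\mathcal O(|z|^{-1})$ as $z\to\infty$. Then $$\widehat Z^{(-1)}(1,z_0,z)=-\operatorname{Sc}Z^{(-1)}(1,z,z_0)+j\operatorname{Sc}Z^{(-1)}(j,z,z_0)$$ and $$\widehat Z^{(-1)}(j,z_0,z)=\operatorname{Vec}Z^{(-1)}(1,z,z_0)-j\operatorname{Vec}Z^{(-1)}(j,z,z_0).$$
   Context: Bicomplex numbers: $i,j$ imaginary units, $i^2=j^2=-1$, $ij=ji$; $\mathbb C_i=\{a+ib\}$, $\mathbb C_j=\{a+jb\}$ ($a,b$ real); $\mathbb B=\{u+jv:u,v\in\mathbb C_i\}$, $\operatorname{Sc}(u+jv)=u$, $\operatorname{Vec}(u+jv)=v$, $\overline{u+jv}=u-jv$. Plane $=\mathbb C_j$, $z=x+jy$, $\partial_{\overline z}=\frac12(\partial_x+j\partial_y)$. Norm on $\mathbb B$: writing $W^\pm=\operatorname{Sc}W\mp i\operatorname{Vec}W\in\mathbb C_i$, $|W|=\frac12(|W^+|+|W^-|)$. $Z=\mathcal O(|z|^{-1})$ as $z\to\infty$ means $|z|\,|Z(z)|$ is bounded for large $|z|$. Setting: $a,b$ are $\mathbb B$-valued Hölder continuous functions on $\mathbb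 C_j$; solutions of Vekua equations are $\mathbb B$-valued functions with continuous first partials satisfying the equation. A Cauchy kernel in $\Sigma$ of a Vekua equation is a family $Z^{(-1)}(1,z_0,z)$, $Z^{(-1)}(j,z_0,z)$, $z_0\in\Sigma$, both solutions in $z\in\Sigma\setminus\{z_0\}$, with $\lim_{z\to z_0}(z-z_0)Z^{(-1)}(\alpha,z_0,z)=\alpha$, $\alpha=1,j$. *)

theory Defs
  imports "HOL-Analysis.Analysis"
begin

text \<open>Bicomplex numbers W = u + j v with u, v in C_i are represented as pairs (u, v)
  of Isabelle complex numbers (whose imaginary unit plays the role of i).
  Points of the plane C_j, z = x + j y, are represented by the Isabelle complex
  number Complex x y (only its real structure is used).\<close>

type_synonym bicomplex = "complex \<times> complex"

definition Sc :: "bicomplex \<Rightarrow> complex" where "Sc W = fst W"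
definition Vec :: "bicomplex \<Rightarrow> complex" where "Vec W = snd W"

definition bone :: bicomplex where "bone = (1, 0)"
definition bj :: bicomplex where "bj = (0, 1)"

text \<open>(u1 + j v1)(u2 + j v2) = (u1 u2 - v1 v2) + j (u1 v2 + v1 u2)\<close>
definition bmul :: "bicomplex \<Rightarrow> bicomplex \<Rightarrow> bicomplex" where
  "bmul W V = (fst W * fst V - snd W * snd V, fst W * snd V + snd W * fst V)"

definition bconj :: "bicomplex \<Rightarrow> bicomplex" where "bconj W = (fst W, - snd W)"

definition pl :: "complex \<Rightarrow> bicomplex" where
  "pl z = (complex_of_real (Re z), complex_of_real (Im z))"

definition bnorm :: "bicomplex \<Rightarrow> real" where
  "bnorm W = (cmod (Sc W - \<i> * Vec W) + cmod (Sc W + \<i> * Vec W)) / 2"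

definition holder_continuous :: "(complex \<Rightarrow> bicomplex) \<Rightarrow> bool" where
  "holder_continuous f \<longleftrightarrow> (\<exists>\<alpha> C. 0 < \<alpha> \<and> \<alpha> \<le> 1 \<and>
      (\<forall>z w. bnorm (f z - f w) \<le> C * cmod (z - w) powr \<alpha>))"

text \<open>W is a solution of d_{zbar} W = a W + b conj(W) in the open set S:
  W has continuous first partial derivatives in S (partials in the x and y
  directions of the plane) and (1/2)(W_x + j W_y) = a W + b conj(W) there.\<close>
definition vekua_solution ::
  "(complex \<Rightarrow> bicomplex) \<Rightarrow> (complex \<Rightarrow> bicomplex) \<Rightarrow> complex set \<Rightarrow> (complex \<Rightarrow> bicomplex) \<Rightarrow> bool"
  where
  "vekua_solution a b S W \<longleftrightarrow> open S \<and>
     (\<exists>Wx Wy. continuous_on S Wx \<and> continuous_on S Wy \<and>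
       (\<forall>z\<in>S. ((\<lambda>t. W (z + complex_of_real t)) has_vector_derivative Wx z) (at 0) \<and>
               ((\<lambda>t. W (z + \<i> * complex_of_real t)) has_vector_derivative Wy z) (at 0) \<and>
               (1/2::real) *\<^sub>R (Wx z + bmul bj (Wy z)) = bmul (a z) (W z) + bmul (b z) (bconj (W z))))"

definition cauchy_kernel ::
  "(complex \<Rightarrow> bicomplex) \<Rightarrow> (complex \<Rightarrow> bicomplex) \<Rightarrow> complex set
     \<Rightarrow> (bicomplex \<Rightarrow> complex \<Rightarrow> complex \<Rightarrow> bicomplex) \<Rightarrow> bool" where
  "cauchy_kernel a b \<Sigma> Z \<longleftrightarrow>
     (\<forall>z0\<in>\<Sigma>. \<forall>\<alpha>\<in>{bone, bj}.
        vekua_solution a b (\<Sigma> - {z0}) (Z \<alpha> z0) \<and>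
        ((\<lambda>z. bmul (pl (z - z0)) (Z \<alpha> z0 z)) \<longlongrightarrow> \<alpha>) (at z0))"

definition decays_inv :: "(complex \<Rightarrow> bicomplex) \<Rightarrow> bool" where
  "decays_inv F \<longleftrightarrow> (\<exists>R M. \<forall>z. R \<le> cmod z \<longrightarrow> cmod z * bnorm (F z) \<le> M)"

end

theory Submission
  imports Defs
begin

text \<open>If W solves the Vekua equation and V the adjoint one, then for F = W V the real 1-form
  Vec (F dz) is closed away from the poles. Integrating it over a large circle minus small circles
  around the poles z and z0 of W = Z(\<alpha>, z, \<cdot>) and V = Zh(\<beta>, z0, \<cdot>): the large circle contributes
  nothing because F = O(|p|^-2), and the small circles contribute 2\<pi> Sc of the residues
  W(z0) \<beta> and \<alpha> V(z). Hence Sc (Z(\<alpha>, z, z0) \<beta>) + Sc (\<alpha> Zh(\<beta>, z0, z)) = 0 for \<alpha>, \<beta> \<in> {1, j},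
  and these four scalar identities are the components of the claimed formulas.\<close>

section \<open>Bicomplex arithmetic\<close>

lemma bmul_assoc: "bmul (bmul X Y) Z = bmul X (bmul Y Z)"
  by (simp add: bmul_def algebra_simps)

lemma norm_bmul_le: "norm (bmul X Y) \<le> 4 * norm X * norm Y"
proof -
  obtain x1 x2 where X: "X = (x1, x2)" by fastforce
  obtain y1 y2 where Y: "Y = (y1, y2)" by fastforce
  have nX: "norm x1 \<le> norm X" "norm x2 \<le> norm X"
    using norm_fst_le[where x=x1 and y=x2] norm_snd_le[where x=x1 and y=x2] X by auto
  have nY: "norm y1 \<le> norm Y" "norm y2 \<le> norm Y"
    using norm_fst_le[where x=y1 and y=y2] norm_snd_le[where x=y1 and y=y2] Y by auto
  have "norm (bmul X Y) \<le> norm (x1*y1 - x2*y2) + norm (x1*y2 + x2*y1)"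
    unfolding bmul_def X Y by (simp add: norm_Pair_le)
  also have "\<dots> \<le> (norm x1 * norm y1 + norm x2 * norm y2) + (norm x1 * norm y2 + norm x2 * norm y1)"
    by (intro add_mono order_trans[OF norm_triangle_ineq4] order_trans[OF norm_triangle_ineq])
       (auto simp: norm_mult)
  also have "\<dots> \<le> 4 * norm X * norm Y"
    using mult_mono[OF nX(1) nY(1)] mult_mono[OF nX(2) nY(2)]
      mult_mono[OF nX(1) nY(2)] mult_mono[OF nX(2) nY(1)] by simp
  finally show ?thesis .
qed

lemma bounded_bilinear_bmul: "bounded_bilinear bmul"
proof
  show "bmul (a + a') b = bmul a b + bmul a' b" for a a' b by (simp add: bmul_def algebra_simps)
  show "bmul a (b + b') = bmul a b + bmul a b'" for a b b' by (simp add: bmul_def algebra_simps)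
  show "bmul (r *\<^sub>R a) b = r *\<^sub>R bmul a b" for r a b
    by (simp add: bmul_def scaleR_conv_of_real algebra_simps)
  show "bmul a (r *\<^sub>R b) = r *\<^sub>R bmul a b" for r a b
    by (simp add: bmul_def scaleR_conv_of_real algebra_simps)
  show "\<exists>K. \<forall>a b. norm (bmul a b) \<le> norm a * norm b * K"
    using norm_bmul_le by (metis mult.commute mult.left_commute)
qed

lemma continuous_on_bmul [continuous_intros]:
  "continuous_on S f \<Longrightarrow> continuous_on S g \<Longrightarrow> continuous_on S (\<lambda>x. bmul (f x) (g x))"
  by (rule bounded_bilinear.continuous_on[OF bounded_bilinear_bmul])

lemma bounded_linear_pl: "bounded_linear pl"
  unfolding pl_def[abs_def]
  by (intro bounded_linear_Pair bounded_linear_compose[OF bounded_linear_of_real]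
      bounded_linear_Re bounded_linear_Im)

lemma continuous_on_pl [continuous_intros]:
  "continuous_on S f \<Longrightarrow> continuous_on S (\<lambda>x. pl (f x))"
  by (rule bounded_linear.continuous_on[OF bounded_linear_pl])

lemma pl_zero [simp]: "pl 0 = 0"
  by (simp add: pl_def zero_prod_def)

lemma bmul_zero_left [simp]: "bmul 0 X = 0"
  by (simp add: bmul_def zero_prod_def)

lemma Vec_zero [simp]: "Vec 0 = 0"
  by (simp add: Vec_def)

lemma norm_pl [simp]: "norm (pl q) = cmod q"
  by (simp add: pl_def norm_Pair cmod_def)

lemma norm_Sc_le: "norm (Sc W) \<le> norm W"
  by (metis Sc_def norm_fst_le prod.collapse)

lemma bounded_linear_Vec: "bounded_linear Vec"
  using bounded_linear_snd by (simp add: Vec_def[abs_def])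

lemma continuous_on_Vec [continuous_intros]:
  "continuous_on S f \<Longrightarrow> continuous_on S (\<lambda>x. Vec (f x))"
  by (rule bounded_linear.continuous_on[OF bounded_linear_Vec])

lemma bnorm_nonneg: "0 \<le> bnorm W"
  by (simp add: bnorm_def)

lemma norm_le_bnorm: "norm W \<le> 2 * bnorm W"
proof -
  obtain u v where W: "W = (u, v)" by fastforce
  have "cmod (2*u) \<le> cmod (u - \<i> * v) + cmod (u + \<i> * v)"
    using norm_triangle_ineq[of "u - \<i> * v" "u + \<i> * v"] by simp
  moreover have "cmod (2*(\<i> * v)) \<le> cmod (u - \<i> * v) + cmod (u + \<i> * v)"
    using norm_triangle_ineq4[of "u + \<i> * v" "u - \<i> * v"] by (simp add: norm_minus_commute algebra_simps)
  moreover have "norm W \<le> cmod u + cmod v" unfolding W by (rule norm_Pair_le)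
  ultimately show ?thesis unfolding bnorm_def Sc_def Vec_def W by (simp add: norm_mult)
qed

section \<open>Vekua equations and the closed form Vec (W V dz)\<close>

text \<open>With dz = dx + j dy, the form Vec (F dz) is Vec F dx + Sc F dy; it is closed exactly when
  d/dx Sc F = d/dy Vec F.\<close>

definition vec_form :: "(complex \<Rightarrow> bicomplex) \<Rightarrow> complex \<Rightarrow> complex \<Rightarrow> complex" where
  "vec_form F p h = Vec (bmul (pl h) (F p))"

definition closed_vec_form ::
  "complex set \<Rightarrow> (complex \<Rightarrow> bicomplex) \<Rightarrow> (complex \<Rightarrow> bicomplex) \<Rightarrow> (complex \<Rightarrow> bicomplex) \<Rightarrow> bool"
  where
  "closed_vec_form U F Fx Fy \<longleftrightarrow>
     (\<forall>z\<in>U. (F has_derivative (\<lambda>h. Re h *\<^sub>R Fx z + Im h *\<^sub>R Fy z)) (at z)) \<and>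
     continuous_on U Fx \<and> continuous_on U Fy \<and> (\<forall>z\<in>U. Sc (Fx z) = Vec (Fy z))"

lemma vec_form_mult_i: "vec_form F p (\<i> * q) = Sc (bmul (pl q) (F p))"
  by (simp add: vec_form_def bmul_def pl_def Sc_def Vec_def algebra_simps)

lemma Vec_bmul_pl_has_vector_derivative:
  assumes "(G has_vector_derivative G') (at t within S)" and "(v has_vector_derivative v') (at t within S)"
  shows "((\<lambda>t. Vec (bmul (pl (v t)) (G t))) has_vector_derivative
           Vec (bmul (pl (v t)) G' + bmul (pl v') (G t))) (at t within S)"
  using bounded_linear.has_vector_derivative[OF bounded_linear_Vec
      bounded_bilinear.has_vector_derivative[OF bounded_bilinear_bmul
        bounded_linear.has_vector_derivative[OF bounded_linear_pl assms(2)] assms(1)]] .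

text \<open>Closedness is the symmetry of the mixed second derivatives of a potential.\<close>

lemma Vec_bmul_pl_partials_swap:
  assumes "Sc Fx = Vec Fy"
  shows "Vec (bmul (pl A) (Re B *\<^sub>R Fx + Im B *\<^sub>R Fy)) = Vec (bmul (pl B) (Re A *\<^sub>R Fx + Im A *\<^sub>R Fy))"
  using assms by (simp add: bmul_def pl_def Sc_def Vec_def scaleR_conv_of_real algebra_simps)

lemma has_derivative_Complex_from_partials:
  fixes W Wx Wy :: "complex \<Rightarrow> bicomplex"
  assumes S: "open S" and z: "z \<in> S" and cWy: "continuous_on S Wy"
    and dx: "((\<lambda>t. W (z + complex_of_real t)) has_vector_derivative Wx z) (at 0)"
    and dy: "\<And>w. w \<in> S \<Longrightarrow> ((\<lambda>t. W (w + \<i> * complex_of_real t)) has_vector_derivative Wy w) (at 0)"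
  shows "((\<lambda>(x, y). W (Complex x y)) has_derivative (\<lambda>(tx, ty). tx *\<^sub>R Wx z + ty *\<^sub>R Wy z)) (at (Re z, Im z))"
proof -
  obtain \<rho> where \<rho>: "\<rho> > 0" "ball z \<rho> \<subseteq> S" using S z open_contains_ball by blast
  define X where "X = ball (Re z) (\<rho>/2)"
  define Y where "Y = ball (Im z) (\<rho>/2)"
  define f where "f x y = W (Complex x y)" for x y
  have XY: "Complex x y \<in> S" if "x \<in> X" "y \<in> Y" for x y
  proof -
    have "dist z (Complex x y) \<le> \<bar>Re z - x\<bar> + \<bar>Im z - y\<bar>"
      unfolding dist_norm using cmod_le[of "z - Complex x y"] by simp
    also have "\<dots> < \<rho>" using that by (simp add: X_def Y_def dist_real_def)
    finally show ?thesis using \<rho> by auto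
  qed
  have fx: "((\<lambda>x. f x (Im z)) has_derivative (\<lambda>t. t *\<^sub>R Wx z)) (at (Re z) within X)"
  proof -
    have e: "(\<lambda>x. f x (Im z)) = (\<lambda>x. W (z + complex_of_real (x - Re z)))"
      unfolding f_def by (rule ext, rule arg_cong[where f = W]) (simp add: complex_eq_iff)
    have "((\<lambda>x. x - Re z) has_derivative (\<lambda>t. t)) (at (Re z) within X)"
      by (auto intro!: derivative_eq_intros)
    from has_derivative_compose[OF this, of "\<lambda>t. W (z + complex_of_real t)"] dx
    show ?thesis unfolding e by (simp add: has_vector_derivative_def)
  qed
  have fy: "((\<lambda>y. f x y) has_derivative blinfun_apply (blinfun_scaleR_left (Wy (Complex x y)))) (at y within Y)"
    if "x \<in> X" "y \<in> Y" for x y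
  proof -
    have e: "(\<lambda>y'. f x y') = (\<lambda>y'. W (Complex x y + \<i> * complex_of_real (y' - y)))"
      unfolding f_def by (rule ext, rule arg_cong[where f = W]) (simp add: complex_eq_iff)
    have "((\<lambda>y'. y' - y) has_derivative (\<lambda>t. t)) (at y within Y)"
      by (auto intro!: derivative_eq_intros)
    from has_derivative_compose[OF this, of "\<lambda>t. W (Complex x y + \<i> * complex_of_real t)"] dy[OF XY[OF that]]
    show ?thesis unfolding e by (simp add: has_vector_derivative_def blinfun_scaleR_left.rep_eq)
  qed
  have c: "isCont (\<lambda>p::real \<times> real. Complex (fst p) (snd p)) (Re z, Im z)"
    unfolding Complex_eq by (intro continuous_intros)
  have "isCont Wy (Complex (fst (Re z, Im z)) (snd (Re z, Im z)))"
    using cWy S z by (simp add: continuous_on_eq_continuous_at)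
  from isCont_o2[OF c this]
  have "isCont (\<lambda>p. Wy (Complex (fst p) (snd p))) (Re z, Im z)" .
  then have cont: "continuous (at (Re z, Im z) within X \<times> Y) (\<lambda>(x, y). blinfun_scaleR_left (Wy (Complex x y)))"
    by (auto simp: case_prod_unfold intro!: continuous_at_imp_continuous_within continuous_intros)
  have "((\<lambda>(x, y). f x y) has_derivative (\<lambda>(tx, ty). tx *\<^sub>R Wx z + blinfun_scaleR_left (Wy (Complex (Re z) (Im z))) ty))
      (at (Re z, Im z) within X \<times> Y)"
    by (rule has_derivative_partialsI[OF fx fy cont]) (auto simp: X_def Y_def \<rho>)
  then show ?thesis
    using at_within_open[of "(Re z, Im z)" "X \<times> Y"] \<rho>
    by (simp add: X_def Y_def f_def open_Times blinfun_scaleR_left.rep_eq)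
qed

lemma has_derivative_from_partials:
  fixes W Wx Wy :: "complex \<Rightarrow> bicomplex"
  assumes "open S" and "z \<in> S" and "continuous_on S Wy"
    and "((\<lambda>t. W (z + complex_of_real t)) has_vector_derivative Wx z) (at 0)"
    and "\<And>w. w \<in> S \<Longrightarrow> ((\<lambda>t. W (w + \<i> * complex_of_real t)) has_vector_derivative Wy w) (at 0)"
  shows "(W has_derivative (\<lambda>h. Re h *\<^sub>R Wx z + Im h *\<^sub>R Wy z)) (at z)"
proof -
  have "((\<lambda>w. (Re w, Im w)) has_derivative (\<lambda>h. (Re h, Im h))) (at z)"
    by (auto intro!: derivative_eq_intros)
  with has_derivative_Complex_from_partials[where W = W and Wx = Wx and Wy = Wy, OF assms]
  show ?thesis
    using has_derivative_compose[of "\<lambda>w. (Re w, Im w)"] by fastforce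
qed

lemma vekua_solutionE:
  assumes "vekua_solution a b S W"
  obtains Wx Wy where "continuous_on S Wx" "continuous_on S Wy"
    "\<And>z. z \<in> S \<Longrightarrow> (W has_derivative (\<lambda>h. Re h *\<^sub>R Wx z + Im h *\<^sub>R Wy z)) (at z)"
    "\<And>z. z \<in> S \<Longrightarrow> (1/2::real) *\<^sub>R (Wx z + bmul bj (Wy z)) = bmul (a z) (W z) + bmul (b z) (bconj (W z))"
proof -
  from assms obtain Wx Wy where S: "open S" and c: "continuous_on S Wx" "continuous_on S Wy"
    and h: "\<forall>z\<in>S. ((\<lambda>t. W (z + complex_of_real t)) has_vector_derivative Wx z) (at 0) \<and>
               ((\<lambda>t. W (z + \<i> * complex_of_real t)) has_vector_derivative Wy z) (at 0) \<and>
               (1/2::real) *\<^sub>R (Wx z + bmul bj (Wy z)) = bmul (a z) (W z) + bmul (b z) (bconj (W z))"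
    unfolding vekua_solution_def by blast
  show ?thesis
  proof (rule that[OF c])
    show "(W has_derivative (\<lambda>h. Re h *\<^sub>R Wx z + Im h *\<^sub>R Wy z)) (at z)" if "z \<in> S" for z
      by (rule has_derivative_from_partials[OF S that c(2)]) (use h that in auto)
  qed (use h in auto)
qed

text \<open>Green's identity for a Vekua equation and its adjoint, pointwise: the two equations make
  Vec (W V dz) closed.\<close>

lemma vekua_adjoint_product_partials:
  assumes eW: "(1/2::real) *\<^sub>R (Wx + bmul bj Wy) = bmul A W + bmul B (bconj W)"
    and eV: "(1/2::real) *\<^sub>R (Vx + bmul bj Vy) = bmul (- A) V + bmul (- bconj B) (bconj V)"
  shows "Sc (bmul W Vx + bmul Wx V) = Vec (bmul W Vy + bmul Wy V)"
proof -
  obtain w1 w2 where W: "W = (w1, w2)" by fastforce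
  obtain v1 v2 where V: "V = (v1, v2)" by fastforce
  obtain p1 p2 where Wx: "Wx = (p1, p2)" by fastforce
  obtain q1 q2 where Wy: "Wy = (q1, q2)" by fastforce
  obtain r1 r2 where Vx: "Vx = (r1, r2)" by fastforce
  obtain t1 t2 where Vy: "Vy = (t1, t2)" by fastforce
  obtain A1 A2 where A: "A = (A1, A2)" by fastforce
  obtain B1 B2 where B: "B = (B1, B2)" by fastforce
  from eW have h1: "p1 = q2 + 2 * (A1 * w1 - A2 * w2 + B1 * w1 + B2 * w2)"
    and h2: "p2 = - q1 + 2 * (A1 * w2 + A2 * w1 - B1 * w2 + B2 * w1)"
    unfolding W Wx Wy A B by (auto simp: bmul_def bconj_def bj_def scaleR_conv_of_real field_simps)
  from eV have h3: "r1 = t2 + 2 * (-A1 * v1 + A2 * v2 - B1 * v1 + B2 * v2)"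
    and h4: "r2 = - t1 + 2 * (-A1 * v2 - A2 * v1 + B1 * v2 + B2 * v1)"
    unfolding V Vx Vy A B by (auto simp: bmul_def bconj_def bj_def scaleR_conv_of_real field_simps)
  show ?thesis
    unfolding W V Wx Wy Vx Vy by (simp add: bmul_def Sc_def Vec_def h1 h2 h3 h4 algebra_simps)
qed

lemma vekua_adjoint_product_closed:
  assumes sW: "vekua_solution a b S W"
    and sV: "vekua_solution (\<lambda>z. - a z) (\<lambda>z. - bconj (b z)) T V"
  shows "\<exists>Fx Fy. closed_vec_form (S \<inter> T) (\<lambda>p. bmul (W p) (V p)) Fx Fy"
proof -
  obtain Wx Wy where cWx: "continuous_on S Wx" and cWy: "continuous_on S Wy"
    and dW: "\<And>z. z \<in> S \<Longrightarrow> (W has_derivative (\<lambda>h. Re h *\<^sub>R Wx z + Im h *\<^sub>R Wy z)) (at z)"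
    and eW: "\<And>z. z \<in> S \<Longrightarrow> (1/2::real) *\<^sub>R (Wx z + bmul bj (Wy z)) = bmul (a z) (W z) + bmul (b z) (bconj (W z))"
    using vekua_solutionE[OF sW] by blast
  obtain Vx Vy where cVx: "continuous_on T Vx" and cVy: "continuous_on T Vy"
    and dV: "\<And>z. z \<in> T \<Longrightarrow> (V has_derivative (\<lambda>h. Re h *\<^sub>R Vx z + Im h *\<^sub>R Vy z)) (at z)"
    and eV: "\<And>z. z \<in> T \<Longrightarrow> (1/2::real) *\<^sub>R (Vx z + bmul bj (Vy z)) = bmul (- a z) (V z) + bmul (- bconj (b z)) (bconj (V z))"
    using vekua_solutionE[OF sV] by blast
  have cW: "continuous_on (S \<inter> T) W" and cV: "continuous_on (S \<inter> T) V"
    by (auto intro!: continuous_at_imp_continuous_on has_derivative_continuous dW dV)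
  have cWx': "continuous_on (S \<inter> T) Wx" and cWy': "continuous_on (S \<inter> T) Wy"
    and cVx': "continuous_on (S \<inter> T) Vx" and cVy': "continuous_on (S \<inter> T) Vy"
    by (rule continuous_on_subset[OF cWx] continuous_on_subset[OF cWy]
        continuous_on_subset[OF cVx] continuous_on_subset[OF cVy]; blast)+
  define Fx where "Fx p = bmul (W p) (Vx p) + bmul (Wx p) (V p)" for p
  define Fy where "Fy p = bmul (W p) (Vy p) + bmul (Wy p) (V p)" for p
  have "closed_vec_form (S \<inter> T) (\<lambda>p. bmul (W p) (V p)) Fx Fy"
    unfolding closed_vec_form_def
  proof (intro conjI ballI)
    fix z assume z: "z \<in> S \<inter> T"
    show "((\<lambda>p. bmul (W p) (V p)) has_derivative (\<lambda>h. Re h *\<^sub>R Fx z + Im h *\<^sub>R Fy z)) (at z)"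
      by (rule has_derivative_eq_rhs[OF bounded_bilinear.FDERIV[OF bounded_bilinear_bmul dW dV]])
         (use z in \<open>auto simp: fun_eq_iff Fx_def Fy_def scaleR_add_right
            bounded_bilinear.add_left[OF bounded_bilinear_bmul] bounded_bilinear.add_right[OF bounded_bilinear_bmul]
            bounded_bilinear.scaleR_left[OF bounded_bilinear_bmul] bounded_bilinear.scaleR_right[OF bounded_bilinear_bmul]\<close>)
    show "Sc (Fx z) = Vec (Fy z)"
      unfolding Fx_def Fy_def using z by (intro vekua_adjoint_product_partials[OF eW eV]) auto
  next
    show "continuous_on (S \<inter> T) Fx" "continuous_on (S \<inter> T) Fy"
      unfolding Fx_def Fy_def
      by (intro continuous_intros cW cV cWx' cWy' cVx' cVy')+
  qed
  then show ?thesis by blast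
qed

section \<open>Cone potentials\<close>

definition cone_potential :: "(complex \<Rightarrow> bicomplex) \<Rightarrow> complex \<Rightarrow> complex \<Rightarrow> complex" where
  "cone_potential F c p = integral {0..1} (\<lambda>s. vec_form F ((1 - s) *\<^sub>R p + s *\<^sub>R c) (c - p))"

lemma closed_vec_form_continuous_on:
  "closed_vec_form U F Fx Fy \<Longrightarrow> continuous_on U F"
  unfolding closed_vec_form_def
  by (meson continuous_at_imp_continuous_on has_derivative_continuous)

lemma closed_vec_form_has_vector_derivative:
  assumes "closed_vec_form U F Fx Fy" and "p t \<in> U"
    and "(p has_vector_derivative p') (at t within S)"
  shows "((\<lambda>t. F (p t)) has_vector_derivative Re p' *\<^sub>R Fx (p t) + Im p' *\<^sub>R Fy (p t)) (at t within S)"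
  using vector_derivative_diff_chain_within[OF assms(3) has_derivative_at_withinI] assms(1,2)
  by (auto simp: closed_vec_form_def o_def)

text \<open>The t-derivative, along a path through p with velocity v, of the integrand
  s \<mapsto> vec_form F ((1 - s) p + s c) (c - p) defining the cone potential.\<close>

definition cone_integrand_derivative ::
  "(complex \<Rightarrow> bicomplex) \<Rightarrow> (complex \<Rightarrow> bicomplex) \<Rightarrow> (complex \<Rightarrow> bicomplex)
     \<Rightarrow> complex \<Rightarrow> complex \<Rightarrow> complex \<Rightarrow> real \<Rightarrow> complex" where
  "cone_integrand_derivative F Fx Fy c p v s =
     (let h = (1 - s) *\<^sub>R p + s *\<^sub>R c; B = (1 - s) *\<^sub>R v in
      Vec (bmul (pl (c - p)) (Re B *\<^sub>R Fx h + Im B *\<^sub>R Fy h) + bmul (pl (- v)) (F h)))"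

text \<open>Closedness turns the integrand into a total s-derivative.\<close>

lemma cone_integrand_derivative_has_integral:
  assumes closed: "closed_vec_form U F Fx Fy"
    and seg: "\<And>s. s \<in> {0..1} \<Longrightarrow> (1 - s) *\<^sub>R p + s *\<^sub>R c \<in> U"
  shows "(cone_integrand_derivative F Fx Fy c p v has_integral - vec_form F p v) {0..1}"
proof -
  have "((\<lambda>s. vec_form F ((1 - s) *\<^sub>R p + s *\<^sub>R c) ((1 - s) *\<^sub>R v)) has_vector_derivative
          cone_integrand_derivative F Fx Fy c p v s) (at s within {0..1})" if s: "s \<in> {0..1}" for s
  proof -
    define h where "h = (1 - s) *\<^sub>R p + s *\<^sub>R c"
    have "((\<lambda>s. (1 - s) *\<^sub>R p + s *\<^sub>R c) has_vector_derivative c - p) (at s within {0..1})"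
      by (auto intro!: derivative_eq_intros simp: algebra_simps)
    from closed_vec_form_has_vector_derivative[OF closed seg[OF s] this]
    have "((\<lambda>s. Vec (bmul (pl ((1 - s) *\<^sub>R v)) (F ((1 - s) *\<^sub>R p + s *\<^sub>R c)))) has_vector_derivative
        Vec (bmul (pl ((1 - s) *\<^sub>R v)) (Re (c - p) *\<^sub>R Fx h + Im (c - p) *\<^sub>R Fy h) + bmul (pl (- v)) (F h)))
        (at s within {0..1})"
      unfolding h_def
      by (rule Vec_bmul_pl_has_vector_derivative) (auto intro!: derivative_eq_intros)
    moreover have "Sc (Fx h) = Vec (Fy h)"
      using closed seg[OF s] by (simp add: closed_vec_form_def h_def)
    ultimately show ?thesis
      using Vec_bmul_pl_partials_swap[of "Fx h" "Fy h" "(1 - s) *\<^sub>R v" "c - p"]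
      by (simp add: vec_form_def cone_integrand_derivative_def h_def Let_def Vec_def)
  qed
  from fundamental_theorem_of_calculus[OF _ this]
  show ?thesis by (simp add: vec_form_def)
qed

lemma cone_integrand_has_vector_derivative:
  assumes closed: "closed_vec_form U F Fx Fy"
    and "(1 - s) *\<^sub>R \<gamma> t + s *\<^sub>R c \<in> U"
    and g: "(\<gamma> has_vector_derivative \<gamma>') (at t within S)"
  shows "((\<lambda>t. vec_form F ((1 - s) *\<^sub>R \<gamma> t + s *\<^sub>R c) (c - \<gamma> t)) has_vector_derivative
           cone_integrand_derivative F Fx Fy c (\<gamma> t) \<gamma>' s) (at t within S)"
proof -
  have "((\<lambda>t. (1 - s) *\<^sub>R \<gamma> t + s *\<^sub>R c) has_vector_derivative (1 - s) *\<^sub>R \<gamma>') (at t within S)"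
    using g by (auto intro!: derivative_eq_intros)
  from closed_vec_form_has_vector_derivative[OF closed assms(2) this]
  show ?thesis
    unfolding vec_form_def cone_integrand_derivative_def Let_def
    by (rule Vec_bmul_pl_has_vector_derivative) (use g in \<open>auto intro!: derivative_eq_intros\<close>)
qed

lemma continuous_on_cone_integrand_derivative:
  assumes closed: "closed_vec_form U F Fx Fy"
    and cg: "continuous_on T \<gamma>" and cg': "continuous_on T \<gamma>'"
    and inU: "\<And>s t. s \<in> {0..1} \<Longrightarrow> t \<in> T \<Longrightarrow> (1 - s) *\<^sub>R \<gamma> t + s *\<^sub>R c \<in> U"
  shows "continuous_on (T \<times> cbox 0 1) (\<lambda>(t, s). cone_integrand_derivative F Fx Fy c (\<gamma> t) (\<gamma>' t) s)"
proof -
  have cH: "continuous_on (T \<times> cbox 0 1) (\<lambda>p. (1 - snd p) *\<^sub>R \<gamma> (fst p) + snd p *\<^sub>R c)"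
    by (intro continuous_intros continuous_on_compose2[OF cg continuous_on_fst]) auto
  have HU: "(\<lambda>p. (1 - snd p) *\<^sub>R \<gamma> (fst p) + snd p *\<^sub>R c) ` (T \<times> cbox 0 1) \<subseteq> U"
    using inU by auto
  have cF: "continuous_on U F" "continuous_on U Fx" "continuous_on U Fy"
    using closed_vec_form_continuous_on[OF closed] closed by (auto simp: closed_vec_form_def)
  show ?thesis
    unfolding cone_integrand_derivative_def Let_def case_prod_unfold
    by (intro continuous_intros continuous_on_compose2[OF cF(1) cH HU] continuous_on_compose2[OF cF(2) cH HU]
        continuous_on_compose2[OF cF(3) cH HU] continuous_on_compose2[OF cg continuous_on_fst]
        continuous_on_compose2[OF cg' continuous_on_fst]) auto
qed

lemma cone_potential_has_vector_derivative:
  assumes closed: "closed_vec_form U F Fx Fy"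
    and g: "\<And>t. t \<in> {t0..t1} \<Longrightarrow> (\<gamma> has_vector_derivative \<gamma>' t) (at t within {t0..t1})"
    and cg': "continuous_on {t0..t1} \<gamma>'"
    and inU: "\<And>s t. s \<in> {0..1} \<Longrightarrow> t \<in> {t0..t1} \<Longrightarrow> (1 - s) *\<^sub>R \<gamma> t + s *\<^sub>R c \<in> U"
    and t: "t \<in> {t0..t1}"
  shows "((\<lambda>t. cone_potential F c (\<gamma> t)) has_vector_derivative - vec_form F (\<gamma> t) (\<gamma>' t)) (at t within {t0..t1})"
proof -
  have "((\<lambda>t. integral (cbox 0 1) (\<lambda>s. vec_form F ((1 - s) *\<^sub>R \<gamma> t + s *\<^sub>R c) (c - \<gamma> t)))
      has_vector_derivative integral (cbox 0 1) (cone_integrand_derivative F Fx Fy c (\<gamma> t) (\<gamma>' t)))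
      (at t within {t0..t1})"
  proof (rule leibniz_rule_vector_derivative)
    show "continuous_on ({t0..t1} \<times> cbox 0 1) (\<lambda>(t, s). cone_integrand_derivative F Fx Fy c (\<gamma> t) (\<gamma>' t) s)"
      using g by (intro continuous_on_cone_integrand_derivative[OF closed _ cg' inU]
          continuous_on_vector_derivative) auto
    show "(\<lambda>s. vec_form F ((1 - s) *\<^sub>R \<gamma> x + s *\<^sub>R c) (c - \<gamma> x)) integrable_on cbox 0 1"
      if x: "x \<in> {t0..t1}" for x
    proof (rule integrable_continuous)
      have "continuous_on (cbox 0 1) (\<lambda>s. F ((1 - s) *\<^sub>R \<gamma> x + s *\<^sub>R c))"
        using inU[OF _ x]
        by (intro continuous_on_compose2[OF closed_vec_form_continuous_on[OF closed]])
           (auto intro!: continuous_intros)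
      then show "continuous_on (cbox 0 1) (\<lambda>s. vec_form F ((1 - s) *\<^sub>R \<gamma> x + s *\<^sub>R c) (c - \<gamma> x))"
        unfolding vec_form_def by (intro continuous_intros)
    qed
  qed (use cone_integrand_has_vector_derivative[OF closed inU g] t in auto)
  then show ?thesis
    using integral_unique[OF cone_integrand_derivative_has_integral[OF closed inU[OF _ t]]]
    by (simp add: cone_potential_def)
qed

lemma closed_vec_form_has_integral_cone_potential:
  assumes closed: "closed_vec_form U F Fx Fy"
    and g: "\<And>t. t \<in> {t0..t1} \<Longrightarrow> (\<gamma> has_vector_derivative \<gamma>' t) (at t within {t0..t1})"
    and cg': "continuous_on {t0..t1} \<gamma>'"
    and inU: "\<And>s t. s \<in> {0..1} \<Longrightarrow> t \<in> {t0..t1} \<Longrightarrow> (1 - s) *\<^sub>R \<gamma> t + s *\<^sub>R c \<in> U"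
    and t01: "t0 \<le> t1"
  shows "((\<lambda>t. vec_form F (\<gamma> t) (\<gamma>' t)) has_integral
           (cone_potential F c (\<gamma> t0) - cone_potential F c (\<gamma> t1))) {t0..t1}"
proof -
  have "((\<lambda>t. - vec_form F (\<gamma> t) (\<gamma>' t)) has_integral
      (cone_potential F c (\<gamma> t1) - cone_potential F c (\<gamma> t0))) {t0..t1}"
    by (intro fundamental_theorem_of_calculus[OF t01] cone_potential_has_vector_derivative[OF closed g cg' inU])
  from has_integral_neg[OF this] show ?thesis by simp
qed

section \<open>Circle integrals around two poles\<close>

text \<open>In the coordinate w, p = z0 + k w, the poles sit at w = 0 and w = 1. The closed half-planes
  \<sigma> Im w \<ge> 0 (\<sigma> = \<plusminus>1) with 0 and 1 removed are star-shaped about \<sigma> \<i>, so Vec (F dz) has a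
  cone potential on each of them.\<close>

definition half_plane_potential ::
  "(complex \<Rightarrow> bicomplex) \<Rightarrow> complex \<Rightarrow> complex \<Rightarrow> real \<Rightarrow> complex \<Rightarrow> complex" where
  "half_plane_potential F z0 k \<sigma> w = cone_potential F (z0 + k * (\<sigma> * \<i>)) (z0 + k * w)"

lemma half_plane_cone_avoids_0_1:
  fixes g :: complex and \<sigma> s :: real
  assumes "\<sigma> \<in> {1, -1}" "0 \<le> \<sigma> * Im g" "g \<notin> {0, 1}" "s \<in> {0..1}"
  shows "(1 - s) *\<^sub>R g + s *\<^sub>R (\<sigma> * \<i>) \<notin> {0, 1}"
proof (cases "s = 0")
  case False
  with assms(4) have s: "0 < s" "s \<le> 1" by auto
  have "\<sigma> * Im ((1 - s) *\<^sub>R g + s *\<^sub>R (\<sigma> * \<i>)) = (1 - s) * (\<sigma> * Im g) + s * (\<sigma> * \<sigma>)"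
    by (simp add: algebra_simps)
  also have "\<sigma> * \<sigma> = 1" using assms(1) by auto
  finally have "\<sigma> * Im ((1 - s) *\<^sub>R g + s *\<^sub>R (\<sigma> * \<i>)) > 0"
    using s assms(2) by (smt (verit) mult_nonneg_nonneg)
  then have "Im ((1 - s) *\<^sub>R g + s *\<^sub>R (\<sigma> * \<i>)) \<noteq> 0" by auto
  then show ?thesis by (metis insertE one_complex.sel(2) singletonD zero_complex.sel(2))
qed (use assms in auto)

lemma circle_avoids_0_1:
  fixes r t :: real
  assumes "w \<in> {0, 1}" "0 < r" "r \<noteq> 1"
  shows "w + r * exp (\<i> * complex_of_real t) \<notin> {0, 1}"
proof
  assume "w + r * exp (\<i> * complex_of_real t) \<in> {0, 1}"
  then have "r * exp (\<i> * complex_of_real t) \<in> {- w, 1 - w}"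
    by (auto simp: algebra_simps add_eq_0_iff)
  moreover have "norm (r * exp (\<i> * complex_of_real t)) = r"
    using assms by (simp add: norm_mult)
  ultimately show False
    using assms by auto
qed

lemma half_plane_path_has_integral:
  fixes g g' :: "real \<Rightarrow> complex" and \<sigma> ta tb :: real
  assumes closed: "closed_vec_form (- {z0, z0 + k}) F Fx Fy" and k: "k \<noteq> 0" and \<sigma>: "\<sigma> \<in> {1, -1}"
    and g: "\<And>t. t \<in> {ta..tb} \<Longrightarrow> (g has_vector_derivative g' t) (at t within {ta..tb})"
    and cg': "continuous_on {ta..tb} g'"
    and g_half_plane: "\<And>t. t \<in> {ta..tb} \<Longrightarrow> 0 \<le> \<sigma> * Im (g t)"
    and g_avoids: "\<And>t. t \<in> {ta..tb} \<Longrightarrow> g t \<notin> {0, 1}"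
    and tab: "ta \<le> tb"
  shows "((\<lambda>t. vec_form F (z0 + k * g t) (k * g' t)) has_integral
      (half_plane_potential F z0 k \<sigma> (g ta) - half_plane_potential F z0 k \<sigma> (g tb))) {ta..tb}"
  unfolding half_plane_potential_def
proof (rule closed_vec_form_has_integral_cone_potential[OF closed])
  show "((\<lambda>t. z0 + k * g t) has_vector_derivative k * g' t) (at t within {ta..tb})"
    if "t \<in> {ta..tb}" for t
    using g[OF that] by (auto intro!: derivative_eq_intros)
  show "continuous_on {ta..tb} (\<lambda>t. k * g' t)" by (intro continuous_intros cg')
  show "(1 - s) *\<^sub>R (z0 + k * g t) + s *\<^sub>R (z0 + k * (\<sigma> * \<i>)) \<in> - {z0, z0 + k}"
    if "s \<in> {0..1}" "t \<in> {ta..tb}" for s t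
  proof -
    have "(1 - s) *\<^sub>R (z0 + k * g t) + s *\<^sub>R (z0 + k * (\<sigma> * \<i>))
        = z0 + k * ((1 - s) *\<^sub>R g t + s *\<^sub>R (\<sigma> * \<i>))"
      by (simp add: scaleR_conv_of_real algebra_simps)
    with half_plane_cone_avoids_0_1[OF \<sigma> g_half_plane[OF that(2)] g_avoids[OF that(2)] that(1)] k
    show ?thesis by auto
  qed
qed (use tab in auto)

lemma half_plane_arc_has_integral:
  fixes \<sigma> r ta tb :: real
  assumes closed: "closed_vec_form (- {z0, z0 + k}) F Fx Fy" and k: "k \<noteq> 0" and \<sigma>: "\<sigma> \<in> {1, -1}"
    and w: "w \<in> {0, 1}" and r: "0 < r" "r \<noteq> 1"
    and arc_half_plane: "\<And>t. t \<in> {ta..tb} \<Longrightarrow> 0 \<le> \<sigma> * sin t" and tab: "ta \<le> tb"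
  shows "((\<lambda>t. vec_form F (z0 + k * (w + r * exp (\<i> * t))) (k * (r * (\<i> * exp (\<i> * t))))) has_integral
      (half_plane_potential F z0 k \<sigma> (w + r * exp (\<i> * ta)) - half_plane_potential F z0 k \<sigma> (w + r * exp (\<i> * tb))))
      {ta..tb}"
proof (rule half_plane_path_has_integral[OF closed k \<sigma>, where g = "\<lambda>t. w + r * exp (\<i> * t)"])
  show "((\<lambda>t. w + r * exp (\<i> * t)) has_vector_derivative r * (\<i> * exp (\<i> * t))) (at t within {ta..tb})" for t
  proof -
    have "((\<lambda>x. w + r * exp (\<i> * x)) has_field_derivative r * (\<i> * exp (\<i> * of_real t))) (at (of_real t))"
      by (auto intro!: derivative_eq_intros)
    from has_vector_derivative_real_field[OF this] show ?thesis .
  qed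
  show "0 \<le> \<sigma> * Im (w + r * exp (\<i> * t))" if "t \<in> {ta..tb}" for t
    using w r mult_nonneg_nonneg[OF less_imp_le[OF r(1)] arc_half_plane[OF that]]
    by (auto simp: Im_exp algebra_simps)
qed (use circle_avoids_0_1[OF w r] tab in \<open>auto intro!: continuous_intros\<close>)

lemma half_plane_real_segment_has_integral:
  fixes \<sigma> ta tb :: real
  assumes closed: "closed_vec_form (- {z0, z0 + k}) F Fx Fy" and k: "k \<noteq> 0" and \<sigma>: "\<sigma> \<in> {1, -1}"
    and avoids: "0 \<notin> {ta..tb}" "1 \<notin> {ta..tb}" and tab: "ta \<le> tb"
  shows "((\<lambda>t. vec_form F (z0 + k * complex_of_real t) k) has_integral
      (half_plane_potential F z0 k \<sigma> ta - half_plane_potential F z0 k \<sigma> tb)) {ta..tb}"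
  using half_plane_path_has_integral[OF closed k \<sigma>, where g = complex_of_real and g' = "\<lambda>t. 1"] avoids tab
  by (auto simp: has_vector_derivative_real_field[OF DERIV_ident, simplified])

lemma half_plane_potentials_agree_on_real_segment:
  fixes ta tb :: real
  assumes closed: "closed_vec_form (- {z0, z0 + k}) F Fx Fy" and k: "k \<noteq> 0"
    and avoids: "0 \<notin> {ta..tb}" "1 \<notin> {ta..tb}" and tab: "ta \<le> tb"
  shows "half_plane_potential F z0 k 1 ta - half_plane_potential F z0 k 1 tb
       = half_plane_potential F z0 k (-1) ta - half_plane_potential F z0 k (-1) tb"
  using half_plane_real_segment_has_integral[OF closed k _ avoids tab]
  by (metis has_integral_unique insert_iff)

definition circle_vec_integral ::
  "(complex \<Rightarrow> bicomplex) \<Rightarrow> complex \<Rightarrow> complex \<Rightarrow> complex \<Rightarrow> real \<Rightarrow> complex" where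
  "circle_vec_integral F z0 k w r =
     integral {-pi..pi} (\<lambda>t. vec_form F (z0 + k * (w + r * exp (\<i> * t))) (k * (r * (\<i> * exp (\<i> * t)))))"

lemma circle_vec_integral_eq_half_plane_potentials:
  fixes r :: real
  assumes closed: "closed_vec_form (- {z0, z0 + k}) F Fx Fy" and k: "k \<noteq> 0"
    and w: "w \<in> {0, 1}" and r: "0 < r" "r \<noteq> 1"
  shows "circle_vec_integral F z0 k w r =
      (half_plane_potential F z0 k (-1) (w - r) - half_plane_potential F z0 k (-1) (w + r))
    + (half_plane_potential F z0 k 1 (w + r) - half_plane_potential F z0 k 1 (w - r))"
proof -
  have exp_pi: "exp (\<i> * complex_of_real pi) = -1" "exp (- (\<i> * complex_of_real pi)) = -1"
    using exp_pi_i by (simp_all add: mult.commute exp_minus)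
  have lower: "\<And>t. t \<in> {-pi..0} \<Longrightarrow> 0 \<le> -1 * sin t"
    using sin_ge_zero[of "- t" for t] by auto
  have upper: "\<And>t. t \<in> {0..pi} \<Longrightarrow> 0 \<le> 1 * sin t"
    by (simp add: sin_ge_zero)
  have "((\<lambda>t. vec_form F (z0 + k * (w + r * exp (\<i> * t))) (k * (r * (\<i> * exp (\<i> * t))))) has_integral
      (half_plane_potential F z0 k (-1) (w - r) - half_plane_potential F z0 k (-1) (w + r))) {-pi..0}"
    using half_plane_arc_has_integral[where \<sigma> = "-1" and ta = "-pi" and tb = 0, OF closed k _ w r lower]
    by (simp add: exp_pi)
  moreover have "((\<lambda>t. vec_form F (z0 + k * (w + r * exp (\<i> * t))) (k * (r * (\<i> * exp (\<i> * t))))) has_integral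
      (half_plane_potential F z0 k 1 (w + r) - half_plane_potential F z0 k 1 (w - r))) {0..pi}"
    using half_plane_arc_has_integral[where \<sigma> = 1 and ta = 0 and tb = pi, OF closed k _ w r upper]
    by (simp add: exp_pi)
  ultimately have "((\<lambda>t. vec_form F (z0 + k * (w + r * exp (\<i> * t))) (k * (r * (\<i> * exp (\<i> * t))))) has_integral
      ((half_plane_potential F z0 k (-1) (w - r) - half_plane_potential F z0 k (-1) (w + r))
     + (half_plane_potential F z0 k 1 (w + r) - half_plane_potential F z0 k 1 (w - r)))) {-pi..pi}"
    by (rule has_integral_combine[rotated 2]) auto
  then show ?thesis
    unfolding circle_vec_integral_def by (rule integral_unique)
qed

text \<open>Each circle is split into its lower and upper arc, evaluated with the respective half-plane
  potential; the contributions of the real segments between the circles cancel since the two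
  potentials differ by a constant on each of them.\<close>

lemma circle_vec_integral_two_holes:
  fixes \<epsilon> R :: real
  assumes closed: "closed_vec_form (- {z0, z0 + k}) F Fx Fy" and k: "k \<noteq> 0"
    and \<epsilon>: "0 < \<epsilon>" "\<epsilon> < 1/2" and R: "2 < R"
  shows "circle_vec_integral F z0 k 0 R = circle_vec_integral F z0 k 0 \<epsilon> + circle_vec_integral F z0 k 1 \<epsilon>"
proof -
  let ?JU = "half_plane_potential F z0 k 1" and ?JL = "half_plane_potential F z0 k (-1)"
  note agree = half_plane_potentials_agree_on_real_segment[OF closed k]
  note circle = circle_vec_integral_eq_half_plane_potentials[OF closed k]
  have eA: "?JU (1 + \<epsilon>) = ?JL (1 + \<epsilon>) - ?JL R + ?JU R"
    using agree[of "1 + \<epsilon>" R] \<epsilon> R by (simp add: algebra_simps)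
  have eB: "?JU \<epsilon> = ?JL \<epsilon> - ?JL (1 - \<epsilon>) + ?JU (1 - \<epsilon>)"
    using agree[of \<epsilon> "1 - \<epsilon>"] \<epsilon> by (simp add: algebra_simps)
  have eC: "?JU (- R) = ?JL (- R) - ?JL (- \<epsilon>) + ?JU (- \<epsilon>)"
    using agree[of "- R" "- \<epsilon>"] \<epsilon> R by (simp add: algebra_simps)
  have c0R: "circle_vec_integral F z0 k 0 R = (?JL (- R) - ?JL R) + (?JU R - ?JU (- R))"
    using circle[of 0 R] R by simp
  have c0\<epsilon>: "circle_vec_integral F z0 k 0 \<epsilon> = (?JL (- \<epsilon>) - ?JL \<epsilon>) + (?JU \<epsilon> - ?JU (- \<epsilon>))"
    using circle[of 0 \<epsilon>] \<epsilon> by simp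
  have c1\<epsilon>: "circle_vec_integral F z0 k 1 \<epsilon>
      = (?JL (1 - \<epsilon>) - ?JL (1 + \<epsilon>)) + (?JU (1 + \<epsilon>) - ?JU (1 - \<epsilon>))"
    using circle[of 1 \<epsilon>] \<epsilon> by simp
  show ?thesis
    unfolding c0R c0\<epsilon> c1\<epsilon> eA eB eC by (simp add: algebra_simps)
qed

lemma circle_in_plane_minus_poles:
  fixes r t :: real
  assumes "k \<noteq> 0" "w \<in> {0, 1}" "0 < r" "r \<noteq> 1"
  shows "z0 + k * (w + r * exp (\<i> * complex_of_real t)) \<in> - {z0, z0 + k}"
  using circle_avoids_0_1[OF assms(2-4), of t] assms(1) by auto

lemma circle_vec_integrand_integrable:
  fixes r :: real
  assumes cF: "continuous_on U F"
    and inU: "\<And>t::real. z0 + k * (w + r * exp (\<i> * complex_of_real t)) \<in> U"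
  shows "(\<lambda>t. vec_form F (z0 + k * (w + r * exp (\<i> * t))) (k * (r * (\<i> * exp (\<i> * t))))) integrable_on {-pi..pi}"
proof -
  have "continuous_on {-pi..pi} (\<lambda>t. F (z0 + k * (w + r * exp (\<i> * complex_of_real t))))"
    by (rule continuous_on_compose2[OF cF]) (auto intro!: continuous_intros inU)
  then show ?thesis
    unfolding vec_form_def by (intro integrable_continuous_real continuous_intros)
qed

text \<open>On a circle about the pole, dz = j (p - pole) dt, so Vec (F dz) = Sc ((p - pole) F p) dt.\<close>

lemma circle_vec_integral_residue_bound:
  fixes r \<delta> :: real
  assumes cF: "continuous_on U F"
    and inU: "\<And>t::real. z0 + k * (w + r * exp (\<i> * complex_of_real t)) \<in> U"
    and near: "\<And>t::real. norm (bmul (pl (k * (r * exp (\<i> * t)))) (F (z0 + k * (w + r * exp (\<i> * t)))) - c) \<le> \<delta>"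
    and \<delta>: "0 \<le> \<delta>"
  shows "cmod (circle_vec_integral F z0 k w r - 2 * of_real pi * Sc c) \<le> 2 * pi * \<delta>"
proof -
  define f where "f t = vec_form F (z0 + k * (w + r * exp (\<i> * t))) (k * (r * (\<i> * exp (\<i> * t))))" for t :: real
  have "f integrable_on {-pi..pi}"
    unfolding f_def by (rule circle_vec_integrand_integrable[OF cF inU])
  then have hi: "((\<lambda>t. f t - Sc c) has_integral (circle_vec_integral F z0 k w r - 2 * of_real pi * Sc c)) {-pi..pi}"
    using has_integral_diff[OF integrable_integral has_integral_const_real[of "Sc c" "-pi" pi]]
    by (simp add: circle_vec_integral_def f_def[abs_def] scaleR_conv_of_real)
  have "f t = Sc (bmul (pl (k * (r * exp (\<i> * t)))) (F (z0 + k * (w + r * exp (\<i> * t)))))" for t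
    unfolding f_def vec_form_mult_i[symmetric] by (simp add: algebra_simps)
  then have bd: "norm (f t - Sc c) \<le> \<delta>" for t
    using norm_Sc_le order_trans near by (metis Sc_def fst_diff)
  have "norm (circle_vec_integral F z0 k w r - 2 * of_real pi * Sc c)
      \<le> \<delta> * Henstock_Kurzweil_Integration.content {-pi..pi}"
    by (rule has_integral_bound_real[OF _ _ hi, of _ "{}"]) (use \<delta> bd in auto)
  then show ?thesis by (simp add: mult.commute)
qed

lemma circle_vec_integral_tendsto_residue:
  fixes w :: complex
  assumes lim: "((\<lambda>p. bmul (pl (p - (z0 + k * w))) (F p)) \<longlongrightarrow> c) (at (z0 + k * w))"
    and cF: "continuous_on U F"
    and inU: "\<And>(r::real) (t::real). 0 < r \<Longrightarrow> r < (1::real) / 2 \<Longrightarrow> z0 + k * (w + r * exp (\<i> * complex_of_real t)) \<in> U"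
    and k: "k \<noteq> 0"
  shows "(circle_vec_integral F z0 k w \<longlongrightarrow> 2 * of_real pi * Sc c) (at_right 0)"
proof (rule tendstoI)
  fix e :: real assume e: "0 < e"
  define \<delta> where "\<delta> = e / (4 * pi)"
  have \<delta>: "0 < \<delta>" "2 * pi * \<delta> < e" using e by (simp_all add: \<delta>_def)
  from tendstoD[OF lim \<delta>(1)] obtain d0 where d0: "d0 > 0"
    and hd: "\<And>p. p \<noteq> z0 + k * w \<Longrightarrow> dist p (z0 + k * w) < d0 \<Longrightarrow>
               dist (bmul (pl (p - (z0 + k * w))) (F p)) c < \<delta>"
    unfolding eventually_at by auto
  define e0 where "e0 = min (1/4) (d0 / cmod k)"
  have "cmod (circle_vec_integral F z0 k w r - 2 * of_real pi * Sc c) \<le> 2 * pi * \<delta>"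
    if r: "0 < r" "r < e0" for r
  proof (rule circle_vec_integral_residue_bound[OF cF])
    show "z0 + k * (w + r * exp (\<i> * complex_of_real t)) \<in> U" for t :: real
      using r by (intro inU) (auto simp: e0_def)
    show "norm (bmul (pl (k * (r * exp (\<i> * t)))) (F (z0 + k * (w + r * exp (\<i> * t)))) - c) \<le> \<delta>" for t :: real
    proof -
      have "cmod (k * (r * exp (\<i> * t))) = r * cmod k" using r by (simp add: norm_mult)
      moreover have "r * cmod k < d0" using r k d0 by (auto simp: e0_def field_simps)
      ultimately show ?thesis
        using hd[of "z0 + k * (w + r * exp (\<i> * t))"] r k by (auto simp: dist_norm algebra_simps)
    qed
  qed (use \<delta> in simp)
  moreover have "0 < e0" using d0 k by (simp add: e0_def)
  ultimately show "\<forall>\<^sub>F r in at_right 0. dist (circle_vec_integral F z0 k w r) (2 * of_real pi * Sc c) < e"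
    unfolding eventually_at_right_field dist_norm using \<delta>(2) by force
qed

lemma circle_vec_integral_decay_bound:
  fixes r :: real
  assumes cF: "continuous_on U F"
    and inU: "\<And>t::real. z0 + k * (0 + r * exp (\<i> * complex_of_real t)) \<in> U"
    and decay: "\<And>p. Rd \<le> cmod p \<Longrightarrow> (cmod p)\<^sup>2 * norm (F p) \<le> M" and M: "0 \<le> M"
    and r: "0 < r" "2 * cmod z0 < cmod k * r" "2 * \<bar>Rd\<bar> < cmod k * r"
  shows "cmod (circle_vec_integral F z0 k 0 r) \<le> 32 * pi * M / (cmod k * r)"
proof -
  have kr: "0 < cmod k * r" using r(2) by (smt (verit) norm_ge_zero)
  define f where "f t = vec_form F (z0 + k * (0 + r * exp (\<i> * t))) (k * (r * (\<i> * exp (\<i> * t))))" for t :: real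
  have bd: "norm (f t) \<le> 16 * M / (cmod k * r)" for t
  proof -
    define q where "q = k * (r * exp (\<i> * t))"
    define p where "p = z0 + q"
    have nq: "cmod q = cmod k * r" using r by (simp add: q_def norm_mult)
    have np: "cmod k * r / 2 \<le> cmod p"
      using norm_triangle_ineq2[of q "- z0"] r nq by (simp add: p_def algebra_simps)
    have "Rd \<le> cmod p" using np r(3) abs_ge_self[of Rd] by linarith
    then have "(cmod p)\<^sup>2 * norm (F p) \<le> M" by (rule decay)
    moreover have "0 < cmod p" using np kr by linarith
    ultimately have FM: "norm (F p) \<le> M / (cmod p)\<^sup>2" by (simp add: field_simps)
    have "f t = Sc (bmul (pl q) (F p))"
      unfolding f_def p_def q_def vec_form_mult_i[symmetric] by (simp add: algebra_simps)
    then have "norm (f t) \<le> 4 * norm (pl q) * norm (F p)"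
      using norm_Sc_le order_trans norm_bmul_le by metis
    also have "\<dots> = 4 * (cmod k * r) * norm (F p)" by (simp add: nq)
    also note FM
    also have "M / (cmod p)\<^sup>2 \<le> M / (cmod k * r / 2)\<^sup>2"
      using np kr M by (intro divide_left_mono power_mono mult_pos_pos) auto
    finally have "norm (f t) \<le> 4 * (cmod k * r) * (M / (cmod k * r / 2)\<^sup>2)"
      using kr by (simp add: mult_left_mono)
    also have "\<dots> = 16 * M / (cmod k * r)"
      using kr by (simp add: field_simps power2_eq_square)
    finally show ?thesis .
  qed
  have "f integrable_on {-pi..pi}"
    unfolding f_def by (rule circle_vec_integrand_integrable[OF cF inU])
  then have "norm (integral {-pi..pi} f) \<le> 16 * M / (cmod k * r) * Henstock_Kurzweil_Integration.content {-pi..pi}"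
    by (intro has_integral_bound_real[OF _ _ integrable_integral, of _ "{}"]) (use bd M kr in auto)
  then show ?thesis
    by (simp add: circle_vec_integral_def f_def[abs_def] mult_ac)
qed

lemma circle_vec_integral_tendsto_zero_at_top:
  assumes cF: "continuous_on U F"
    and inU: "\<And>(r::real) (t::real). (2::real) < r \<Longrightarrow> z0 + k * (0 + r * exp (\<i> * complex_of_real t)) \<in> U"
    and decay: "\<And>p. Rd \<le> cmod p \<Longrightarrow> (cmod p)\<^sup>2 * norm (F p) \<le> M"
    and k: "k \<noteq> 0"
  shows "(circle_vec_integral F z0 k 0 \<longlongrightarrow> 0) at_top"
proof (rule tendstoI)
  fix e :: real assume e: "0 < e"
  define M' where "M' = max M 0"
  have decay': "(cmod p)\<^sup>2 * norm (F p) \<le> M'" if "Rd \<le> cmod p" for p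
    using decay[OF that] by (simp add: M'_def)
  define R0 where "R0 = max (max 2 (2 * cmod z0 / cmod k)) (max (2 * \<bar>Rd\<bar> / cmod k) (32 * pi * M' / (cmod k * e)))"
  have kp: "cmod k > 0" using k by simp
  have "cmod (circle_vec_integral F z0 k 0 r) < e" if r: "R0 < r" for r
  proof -
    have r2: "2 < r" using r by (simp add: R0_def)
    have "cmod (circle_vec_integral F z0 k 0 r) \<le> 32 * pi * M' / (cmod k * r)"
      using r kp by (intro circle_vec_integral_decay_bound[OF cF inU[OF r2] decay'])
                    (auto simp: M'_def R0_def field_simps)
    also have "\<dots> < e"
      using r kp e by (simp add: R0_def field_simps)
    finally show ?thesis .
  qed
  then show "\<forall>\<^sub>F r in at_top. dist (circle_vec_integral F z0 k 0 r) 0 < e"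
    unfolding dist_norm by (intro eventually_mono[OF eventually_gt_at_top[of R0]]) auto
qed

text \<open>Green's formula for the closed form Vec (F dz) on a large disc with two small discs
  around the poles removed: the outer circle integral is constant in R and tends to 0, the
  inner ones tend to 2\<pi> times the scalar parts of the residues.\<close>

lemma residue_sum_eq_zero:
  fixes F Fx Fy :: "complex \<Rightarrow> bicomplex" and c0 c1 :: bicomplex
  assumes closed: "closed_vec_form (- {z0, z1}) F Fx Fy"
    and lim0: "((\<lambda>p. bmul (pl (p - z0)) (F p)) \<longlongrightarrow> c0) (at z0)"
    and lim1: "((\<lambda>p. bmul (pl (p - z1)) (F p)) \<longlongrightarrow> c1) (at z1)"
    and decay: "\<And>p. Rd \<le> cmod p \<Longrightarrow> (cmod p)\<^sup>2 * norm (F p) \<le> M"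
    and ne: "z0 \<noteq> z1"
  shows "Sc c0 + Sc c1 = 0"
proof -
  define k where "k = z1 - z0"
  have k: "k \<noteq> 0" using ne by (simp add: k_def)
  have z1: "z1 = z0 + k" by (simp add: k_def)
  have closed': "closed_vec_form (- {z0, z0 + k}) F Fx Fy" using closed by (simp add: z1)
  note cF = closed_vec_form_continuous_on[OF closed']
  note circle = circle_in_plane_minus_poles[OF k]
  have "(circle_vec_integral F z0 k 0 \<longlongrightarrow> 2 * of_real pi * Sc c0) (at_right 0)"
    using lim0 by (intro circle_vec_integral_tendsto_residue[OF _ cF _ k] circle) auto
  moreover have "(circle_vec_integral F z0 k 1 \<longlongrightarrow> 2 * of_real pi * Sc c1) (at_right 0)"
    using lim1 by (intro circle_vec_integral_tendsto_residue[OF _ cF _ k] circle) (auto simp: z1)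
  ultimately have small: "((\<lambda>\<epsilon>. circle_vec_integral F z0 k 0 \<epsilon> + circle_vec_integral F z0 k 1 \<epsilon>)
      \<longlongrightarrow> 2 * of_real pi * (Sc c0 + Sc c1)) (at_right 0)"
    by (simp add: tendsto_add distrib_left)
  have "circle_vec_integral F z0 k 0 R = 2 * of_real pi * (Sc c0 + Sc c1)" if R: "2 < R" for R
  proof (rule tendsto_unique[OF _ tendsto_eventually small])
    show "\<forall>\<^sub>F \<epsilon> in at_right 0. circle_vec_integral F z0 k 0 \<epsilon> + circle_vec_integral F z0 k 1 \<epsilon>
        = circle_vec_integral F z0 k 0 R"
      unfolding eventually_at_right_field
      using circle_vec_integral_two_holes[OF closed' k _ _ R] by (intro exI[of _ "1/2"]) auto
  qed simp
  then have "(circle_vec_integral F z0 k 0 \<longlongrightarrow> 2 * of_real pi * (Sc c0 + Sc c1)) at_top"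
    by (intro tendsto_eventually) (auto intro: eventually_mono[OF eventually_gt_at_top[of 2]])
  moreover have "(circle_vec_integral F z0 k 0 \<longlongrightarrow> 0) at_top"
    using decay by (intro circle_vec_integral_tendsto_zero_at_top[OF cF _ _ k] circle) auto
  ultimately have "2 * of_real pi * (Sc c0 + Sc c1) = 0"
    by (rule tendsto_unique[rotated]) simp
  then show ?thesis by simp
qed

section \<open>Cauchy kernels\<close>

lemma vekua_solution_isCont:
  assumes "vekua_solution a b S W" and "z \<in> S"
  shows "isCont W z"
  using assms by (elim vekua_solutionE) (auto dest: has_derivative_continuous)

lemma decays_inv_bmul:
  assumes "decays_inv W" and "decays_inv V"
  obtains R M where "\<And>p. R \<le> cmod p \<Longrightarrow> (cmod p)\<^sup>2 * norm (bmul (W p) (V p)) \<le> M"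
proof -
  obtain R1 M1 where W: "\<And>p. R1 \<le> cmod p \<Longrightarrow> cmod p * bnorm (W p) \<le> M1"
    using assms(1) unfolding decays_inv_def by blast
  obtain R2 M2 where V: "\<And>p. R2 \<le> cmod p \<Longrightarrow> cmod p * bnorm (V p) \<le> M2"
    using assms(2) unfolding decays_inv_def by blast
  have M1: "0 \<le> M1"
    using W[of "of_real \<bar>R1\<bar>"] bnorm_nonneg[of "W (of_real \<bar>R1\<bar>)"] by (smt (verit) norm_of_real mult_nonneg_nonneg norm_ge_zero)
  have "(cmod p)\<^sup>2 * norm (bmul (W p) (V p)) \<le> 16 * M1 * M2" if p: "max R1 R2 \<le> cmod p" for p
  proof -
    have "cmod p * norm (W p) \<le> cmod p * (2 * bnorm (W p))"
      and "cmod p * norm (V p) \<le> cmod p * (2 * bnorm (V p))"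
      by (intro mult_left_mono norm_le_bnorm norm_ge_zero)+
    then have w: "cmod p * norm (W p) \<le> 2 * M1" and v: "cmod p * norm (V p) \<le> 2 * M2"
      using W[of p] V[of p] p by auto
    have "(cmod p)\<^sup>2 * norm (bmul (W p) (V p)) \<le> (cmod p)\<^sup>2 * (4 * norm (W p) * norm (V p))"
      by (intro mult_left_mono norm_bmul_le) auto
    also have "\<dots> = 4 * ((cmod p * norm (W p)) * (cmod p * norm (V p)))"
      by (simp add: power2_eq_square algebra_simps)
    also have "\<dots> \<le> 4 * ((2 * M1) * (2 * M2))"
      using mult_mono[OF w v] M1 by (simp add: mult_ac)
    finally show ?thesis by simp
  qed
  then show ?thesis by (rule that)
qed

lemma cauchy_kernels_pairing:
  fixes W V :: "complex \<Rightarrow> bicomplex" and \<alpha> \<beta> :: bicomplex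
  assumes sW: "vekua_solution a b (UNIV - {z1}) W"
    and sV: "vekua_solution (\<lambda>z. - a z) (\<lambda>z. - bconj (b z)) (UNIV - {z0}) V"
    and lW: "((\<lambda>p. bmul (pl (p - z1)) (W p)) \<longlongrightarrow> \<alpha>) (at z1)"
    and lV: "((\<lambda>p. bmul (pl (p - z0)) (V p)) \<longlongrightarrow> \<beta>) (at z0)"
    and dW: "decays_inv W" and dV: "decays_inv V"
    and ne: "z0 \<noteq> z1"
  shows "Sc (bmul (W z0) \<beta>) + Sc (bmul \<alpha> (V z1)) = 0"
proof -
  have "(UNIV - {z1}) \<inter> (UNIV - {z0}) = - {z0, z1}" by auto
  with vekua_adjoint_product_closed[OF sW sV]
  obtain Fx Fy where closed: "closed_vec_form (- {z0, z1}) (\<lambda>p. bmul (W p) (V p)) Fx Fy"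
    by metis
  have "(W \<longlongrightarrow> W z0) (at z0)"
    using vekua_solution_isCont[OF sW] ne by (simp add: isCont_def)
  from bounded_bilinear.tendsto[OF bounded_bilinear_bmul this lV]
  have "((\<lambda>p. bmul (W p) (bmul (pl (p - z0)) (V p))) \<longlongrightarrow> bmul (W z0) \<beta>) (at z0)" .
  moreover have "bmul (W p) (bmul (pl (p - z0)) (V p)) = bmul (pl (p - z0)) (bmul (W p) (V p))" for p
    by (simp add: bmul_def algebra_simps)
  ultimately have lim0: "((\<lambda>p. bmul (pl (p - z0)) (bmul (W p) (V p))) \<longlongrightarrow> bmul (W z0) \<beta>) (at z0)"
    by simp
  have "(V \<longlongrightarrow> V z1) (at z1)"
    using vekua_solution_isCont[OF sV] ne by (simp add: isCont_def)
  from bounded_bilinear.tendsto[OF bounded_bilinear_bmul lW this]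
  have lim1: "((\<lambda>p. bmul (pl (p - z1)) (bmul (W p) (V p))) \<longlongrightarrow> bmul \<alpha> (V z1)) (at z1)"
    by (simp only: bmul_assoc)
  obtain R M where "\<And>p. R \<le> cmod p \<Longrightarrow> (cmod p)\<^sup>2 * norm (bmul (W p) (V p)) \<le> M"
    using decays_inv_bmul[OF dW dV] by blast
  from residue_sum_eq_zero[OF closed lim0 lim1 this ne] show ?thesis .
qed

theorem mainTheorem4:
  fixes a b :: "complex \<Rightarrow> bicomplex"
    and Z Zh :: "bicomplex \<Rightarrow> complex \<Rightarrow> complex \<Rightarrow> bicomplex"
  assumes "holder_continuous a" and "holder_continuous b"
    and "cauchy_kernel a b UNIV Z"
    and "cauchy_kernel (\<lambda>z. - a z) (\<lambda>z. - bconj (b z)) UNIV Zh"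
    and "\<forall>z0. \<forall>\<alpha>\<in>{bone, bj}. decays_inv (Z \<alpha> z0)"
    and "\<forall>z0. \<forall>\<alpha>\<in>{bone, bj}. decays_inv (Zh \<alpha> z0)"
    and "z \<noteq> z0"
  shows "Zh bone z0 z = (- Sc (Z bone z z0), Sc (Z bj z z0)) \<and>
         Zh bj z0 z = (Vec (Z bone z z0), - Vec (Z bj z z0))"
proof -
  have pairing: "Sc (bmul (Z \<alpha> z z0) \<beta>) + Sc (bmul \<alpha> (Zh \<beta> z0 z)) = 0"
    if "\<alpha> \<in> {bone, bj}" and "\<beta> \<in> {bone, bj}" for \<alpha> \<beta>
  proof (rule cauchy_kernels_pairing[where W = "Z \<alpha> z" and V = "Zh \<beta> z0"])
    show "vekua_solution a b (UNIV - {z}) (Z \<alpha> z)"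
      and "((\<lambda>p. bmul (pl (p - z)) (Z \<alpha> z p)) \<longlongrightarrow> \<alpha>) (at z)"
      using assms(3) that(1) unfolding cauchy_kernel_def by blast+
    show "vekua_solution (\<lambda>z. - a z) (\<lambda>z. - bconj (b z)) (UNIV - {z0}) (Zh \<beta> z0)"
      and "((\<lambda>p. bmul (pl (p - z0)) (Zh \<beta> z0 p)) \<longlongrightarrow> \<beta>) (at z0)"
      using assms(4) that(2) unfolding cauchy_kernel_def by blast+
  qed (use assms(5-7) that in auto)
  show ?thesis
    using pairing[of bone bone] pairing[of bj bone] pairing[of bone bj] pairing[of bj bj]
    by (auto simp: bmul_def bone_def bj_def Sc_def Vec_def prod_eq_iff add_eq_0_iff algebra_simps)
qed

end
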